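(* Fix integers $n,d\ge 1$, constants $0<h_{min}<h_{max}$, an initial state $\mathcal{X}^{(0)}\in\mathbb{R}^{dn}$, an initial bandwidth $h_1\in[h_{min},h_{max}]$, and a non-negative sequence $(\nu_k)$ with $\nu_k\to 0$, and let $(\mathcal{X}^{(k)},h_k,i_k)$ be generated by the Doubly Stochastic Mean-Shift (DSMS) process described in the context. Let $\epsilon>0$. For $k_0\in\mathbb{N}$ define the event $$A_\epsilon(k_0)=\left\{\omega:\ \forall k\ge k_0,\ \big\|\nabla_{\mathbf{x}_{i_k}}L_{h_{k+1}}(\mathcal{X}^{(k)})(\omega)\big\|<\epsilon\right\},$$ and define stopping times $T_1=\min\{k\in\mathbb{N}:\ \|\nabla L_{h_{k+1}}(\mathcal{X}^{(k)})\|_{\max}\ge\epsilon\}$ and, for $p\ge 2$, $T_p=\min\{k>T_{p-1}:\ \|\nabla L_{h_{k+1}}(\mathcal{X}^{(k)})\|_{\max}\ge\epsilon\}$ (each set to $\infty$ if no such $k$ exists). Then for every $k_0\in\mathbb{N}$ and every integer $p\ge 0$, $$\mathbb{P}\left[\{T_{k_0+p}<\infty\}\cap A_\epsilon(k_0)\right]\le\left(1-\frac1n\right)^p.$$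
   Context: A profile function is a map $k:[0,\infty)\to\mathbb{R}_+$ that vanishes on $[1,\infty)$, is $C^1$, non-increasing and convex, with $k'(t)<0$ for all $t\in[0,1)$. The associated kernel is $K(\mathbf{u})=k(\|\mathbf{u}\|^2)$ on $\mathbb{R}^d$ and the weight function is $G(\mathbf{u})=-k'(\|\mathbf{u}\|^2)$; $\|\cdot\|$ is the Euclidean norm. A state is $\mathcal{X}=[\mathbf{x}_1,\ldots,\mathbf{x}_n]\in\mathbb{R}^{dn}$ with $\mathbf{x}_i\in\mathbb{R}^d$. For $h>0$, $L_h(\mathcal{X})=\sum_{1\le i\le j\le n}K\big((\mathbf{x}_i-\mathbf{x}_j)/h\big)$; $\nabla_{\mathbf{x}_i}L_h$ is the partial gradient with respect to $\mathbf{x}_i$, and for the full gradient we use the norm $\|\nabla L_h(\mathcal{X})\|_{\max}=\max_{i\in[n]}\|\nabla_{\mathbf{x}_i}L_h(\mathcal{X})\|$. Mean-shift operator: $\mathcal{S}_h(x;\mathcal{X})=\sum_i G((x-\mathbf{x}_i)/h)\mathbf{x}_i\big/\sum_i G((x-\mathbf{x}_i)/h)$. DSMS process: for $k=0,1,2,\ldots$: if $k\ge1$, set $\delta_k=\min\{\nu_k,\ (h_k/h_{min})^2-1,\ 1-(h_k/h_{max})^2\}$, draw $\alpha_k$ uniformly on $(1-\delta_k,1+\delta_k)$ (with $\alpha_k=1$ if $\delta_k=0$), and set $h_{k+1}=h_k/\sqrt{\alpha_k}$; draw $i_k$ uniformly from $\{1,\ldots,n\}$; set $\mathbf{x}_{i_k}^{(k+1)}=\mathcal{S}_{h_{k+1}}(\mathbf{x}_{i_k}^{(k)};\mathcal{X}^{(k)})$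 and $\mathbf{x}_j^{(k+1)}=\mathbf{x}_j^{(k)}$ for $j\ne i_k$. The indices $i_k$ are i.i.d., each independent of all previous choices (in particular of $h_{k+1}$ and of the past), and $(i_k)$, $(h_k)$ are independent. *)

theory Defs
  imports "HOL-Analysis.Analysis" "HOL-Probability.Probability"
begin

definition profile :: "(real \<Rightarrow> real) \<Rightarrow> (real \<Rightarrow> real) \<Rightarrow> bool" where
  "profile kp kp' \<longleftrightarrow>
     (\<forall>t\<ge>0. kp t \<ge> 0) \<and>
     (\<forall>t\<ge>1. kp t = 0) \<and>
     (\<forall>t\<ge>0. (kp has_real_derivative kp' t) (at t within {0..})) \<and>
     continuous_on {0..} kp' \<and>
     (\<forall>s t. 0 \<le> s \<longrightarrow> s \<le> t \<longrightarrow> kp t \<le> kp s) \<and>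
     convex_on {0..} kp \<and>
     (\<forall>t. 0 \<le> t \<longrightarrow> t < 1 \<longrightarrow> kp' t < 0)"

definition kern :: "(real \<Rightarrow> real) \<Rightarrow> 'a::real_normed_vector \<Rightarrow> real" where
  "kern kp u = kp ((norm u)\<^sup>2)"

definition weight :: "(real \<Rightarrow> real) \<Rightarrow> 'a::real_normed_vector \<Rightarrow> real" where
  "weight kp' u = - kp' ((norm u)\<^sup>2)"

text \<open>States are maps nat => 'a; only the points with indices 0..<n matter
  (they represent x_1,...,x_n).\<close>
definition Lh :: "(real \<Rightarrow> real) \<Rightarrow> nat \<Rightarrow> real \<Rightarrow> (nat \<Rightarrow> 'a::real_normed_vector) \<Rightarrow> real" where
  "Lh kp n h X = (\<Sum>i<n. \<Sum>j\<in>{i..<n}. kern kp ((1/h) *\<^sub>R (X i - X j)))"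

definition pgrad :: "((nat \<Rightarrow> 'a::euclidean_space) \<Rightarrow> real) \<Rightarrow> (nat \<Rightarrow> 'a) \<Rightarrow> nat \<Rightarrow> 'a" where
  "pgrad L X i = (SOME g. ((\<lambda>y. L (X(i := y))) has_derivative (\<lambda>v. g \<bullet> v)) (at (X i)))"

definition grad_max :: "nat \<Rightarrow> ((nat \<Rightarrow> 'a::euclidean_space) \<Rightarrow> real) \<Rightarrow> (nat \<Rightarrow> 'a) \<Rightarrow> real" where
  "grad_max n L X = Max ((\<lambda>i. norm (pgrad L X i)) ` {0..<n})"

definition mean_shift :: "(real \<Rightarrow> real) \<Rightarrow> nat \<Rightarrow> real \<Rightarrow> 'a::real_normed_vector \<Rightarrow> (nat \<Rightarrow> 'a) \<Rightarrow> 'a" where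
  "mean_shift kp' n h x X =
     (1 / (\<Sum>i<n. weight kp' ((1/h) *\<^sub>R (x - X i)))) *\<^sub>R
       (\<Sum>i<n. weight kp' ((1/h) *\<^sub>R (x - X i)) *\<^sub>R X i)"

definition dsms_delta :: "real \<Rightarrow> real \<Rightarrow> real \<Rightarrow> real \<Rightarrow> real" where
  "dsms_delta nuk hmin hmax h = min nuk (min ((h/hmin)\<^sup>2 - 1) (1 - (h/hmax)\<^sup>2))"

text \<open>Bandwidth: dsms_bw ... k w = h_{k+1}(w). The randomness for alpha_k is realised as
  alpha_k = 1 + delta_k * U_k with U_k uniform on (-1,1) (so alpha_k is uniform on
  (1-delta_k, 1+delta_k), and alpha_k = 1 if delta_k = 0).\<close>
fun dsms_bw :: "(nat \<Rightarrow> real) \<Rightarrow> real \<Rightarrow> real \<Rightarrow> real \<Rightarrow> (nat \<Rightarrow> 'w \<Rightarrow> real) \<Rightarrow> nat \<Rightarrow> 'w \<Rightarrow> real" where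
  "dsms_bw nu hmin hmax h1 U 0 w = h1"
| "dsms_bw nu hmin hmax h1 U (Suc k) w =
     dsms_bw nu hmin hmax h1 U k w /
       sqrt (1 + dsms_delta (nu (Suc k)) hmin hmax (dsms_bw nu hmin hmax h1 U k w) * U (Suc k) w)"

fun dsms_state :: "(real \<Rightarrow> real) \<Rightarrow> nat \<Rightarrow> (nat \<Rightarrow> real) \<Rightarrow> real \<Rightarrow> real \<Rightarrow> real \<Rightarrow>
    (nat \<Rightarrow> 'a::real_normed_vector) \<Rightarrow> (nat \<Rightarrow> 'w \<Rightarrow> real) \<Rightarrow> (nat \<Rightarrow> 'w \<Rightarrow> nat) \<Rightarrow>
    nat \<Rightarrow> 'w \<Rightarrow> (nat \<Rightarrow> 'a)" where
  "dsms_state kp' n nu hmin hmax h1 X0 U I 0 w = X0"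
| "dsms_state kp' n nu hmin hmax h1 X0 U I (Suc k) w =
     (let X = dsms_state kp' n nu hmin hmax h1 X0 U I k w;
          i = I k w
      in X(i := mean_shift kp' n (dsms_bw nu hmin hmax h1 U k w) (X i) X))"

text \<open>Successive hitting times of a predicate hit :: nat => bool.
  hit_time hit (Suc p) = T_{p+1}; by convention hit_time hit 0 = 0 (T_0 is not
  defined in the paper; the convention only makes the event T_0 < inf the whole space).\<close>
fun hit_time :: "(nat \<Rightarrow> bool) \<Rightarrow> nat \<Rightarrow> enat" where
  "hit_time hit 0 = 0"
| "hit_time hit (Suc 0) = (if \<exists>k. hit k then enat (LEAST k. hit k) else \<infinity>)"
| "hit_time hit (Suc (Suc p)) =
     (case hit_time hit (Suc p) of
        \<infinity> \<Rightarrow> \<infinity>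
      | enat m \<Rightarrow> (if \<exists>k>m. hit k then enat (LEAST k. m < k \<and> hit k) else \<infinity>))"

end

theory Submission
  imports Defs
begin

text \<open>Let \<open>F k\<close> be the \<open>\<sigma>\<close>-algebra generated by the bandwidth noise \<open>U 0, \<dots>, U k\<close>
  and the indices \<open>I 0, \<dots>, I (k - 1)\<close>. The bandwidth used at step \<open>k\<close> and the state
  before it, hence all partial gradients at step \<open>k\<close>, are \<open>F k\<close>-measurable, whereas \<open>I k\<close>
  is uniform on the \<open>n\<close> coordinates and independent of \<open>F k\<close>. So at a step where some
  partial gradient has norm at least \<open>\<epsilon>\<close>, the chosen coordinate avoids all of them with
  conditional probability at most \<open>1 - 1/n\<close>. If \<open>T (k\<^sub>0 + p) < \<infinity>\<close>, at least \<open>p\<close> such steps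
  occur at times \<open>\<ge> k\<^sub>0\<close>, and on \<open>A\<close> each of them is avoided; chaining the conditional
  bound over these steps gives \<open>(1 - 1/n)\<^sup>p\<close>.\<close>

section \<open>Partial gradients of the kernel loss\<close>

lemma linear_eq_inner_gradient:
  fixes D :: "'a::euclidean_space \<Rightarrow> real"
  assumes "linear D"
  shows "D = (\<lambda>v. (\<Sum>b\<in>Basis. D b *\<^sub>R b) \<bullet> v)"
proof
  fix v :: 'a
  have "D v = D (\<Sum>b\<in>Basis. (v \<bullet> b) *\<^sub>R b)" by (simp add: euclidean_representation)
  also have "\<dots> = (\<Sum>b\<in>Basis. (v \<bullet> b) * D b)"
    using assms by (simp add: linear_sum linear_scale)
  also have "\<dots> = (\<Sum>b\<in>Basis. D b *\<^sub>R b) \<bullet> v"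
    by (simp add: inner_sum_left inner_sum_right inner_commute mult.commute)
  finally show "D v = (\<Sum>b\<in>Basis. D b *\<^sub>R b) \<bullet> v" .
qed

lemma differentiable_kern:
  assumes "profile kp kp'"
  shows "(kern kp :: 'a::euclidean_space \<Rightarrow> real) differentiable (at u)"
proof -
  have "(kp has_real_derivative kp' (u \<bullet> u)) (at (u \<bullet> u) within {0..})"
    using assms unfolding profile_def by simp
  then have "(kp has_derivative (*) (kp' (u \<bullet> u))) (at (u \<bullet> u) within range (\<lambda>u::'a. u \<bullet> u))"
    unfolding has_field_derivative_def by (rule has_derivative_subset) auto
  from has_derivative_in_compose[OF has_derivative_inner[OF has_derivative_ident has_derivative_ident] this]
  have "(\<lambda>u::'a. kp (u \<bullet> u)) differentiable (at u)"
    unfolding differentiable_def by auto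
  moreover have "kern kp = (\<lambda>u::'a. kp (u \<bullet> u))"
    by (simp add: fun_eq_iff kern_def power2_norm_eq_inner)
  ultimately show ?thesis by simp
qed

lemma continuous_on_weight:
  assumes "profile kp kp'"
  shows "continuous_on UNIV (weight kp' :: 'a::real_normed_vector \<Rightarrow> real)"
proof -
  have "continuous_on {0..} kp'" using assms unfolding profile_def by simp
  then have "continuous_on UNIV (\<lambda>u::'a. kp' ((norm u)\<^sup>2))"
    by (rule continuous_on_compose2) (auto intro!: continuous_intros)
  then show ?thesis unfolding weight_def[abs_def] by (intro continuous_intros)
qed

lemma differentiable_Lh_update:
  fixes X :: "nat \<Rightarrow> 'a::euclidean_space"
  assumes "profile kp kp'"
  shows "(\<lambda>y. Lh kp n h (X(i := y))) differentiable (at y0)"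
proof -
  have upd: "(\<lambda>y. (X(i := y)) a) differentiable (at y0)" for a
    by (cases "a = i") auto
  have "(\<lambda>y. kern kp ((1 / h) *\<^sub>R ((X(i := y)) a - (X(i := y)) c))) differentiable (at y0)" for a c
  proof -
    have "(\<lambda>y. (1 / h) *\<^sub>R ((X(i := y)) a - (X(i := y)) c)) differentiable (at y0)"
      by (intro differentiable_scaleR differentiable_diff upd differentiable_const)
    from differentiable_chain_at[OF this differentiable_kern[OF assms]] show ?thesis
      by (simp add: o_def)
  qed
  then show ?thesis
    unfolding Lh_def by (intro differentiable_sum ballI finite_lessThan finite_atLeastLessThan)
qed

lemma has_derivative_pgrad:
  fixes X :: "nat \<Rightarrow> 'a::euclidean_space"
  assumes "profile kp kp'"
  shows "((\<lambda>y. Lh kp n h (X(i := y))) has_derivative (\<lambda>v. pgrad (Lh kp n h) X i \<bullet> v)) (at (X i))"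
proof -
  obtain D where D: "((\<lambda>y. Lh kp n h (X(i := y))) has_derivative D) (at (X i))"
    using differentiable_Lh_update[OF assms] unfolding differentiable_def by blast
  then have "D = (\<lambda>v. (\<Sum>b\<in>Basis. D b *\<^sub>R b) \<bullet> v)"
    by (intro linear_eq_inner_gradient has_derivative_linear)
  with D have "\<exists>g. ((\<lambda>y. Lh kp n h (X(i := y))) has_derivative (\<lambda>v. g \<bullet> v)) (at (X i))"
    by metis
  then show ?thesis unfolding pgrad_def by (rule someI_ex)
qed

lemma grad_max_ge_iff:
  assumes "n \<ge> 1"
  shows "\<epsilon> \<le> grad_max n L X \<longleftrightarrow> (\<exists>j<n. \<epsilon> \<le> norm (pgrad L X j))"
proof -
  have "finite ((\<lambda>i. norm (pgrad L X i)) ` {0..<n})" "(\<lambda>i. norm (pgrad L X i)) ` {0..<n} \<noteq> {}"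
    using assms by auto
  then show ?thesis unfolding grad_max_def by (auto simp: Max_ge_iff)
qed

lemma difference_quotient_LIMSEQ:
  fixes f :: "'a::real_normed_vector \<Rightarrow> real"
  assumes "(f has_derivative D) (at x)"
  shows "(\<lambda>m. real (Suc m) * (f (x + inverse (real (Suc m)) *\<^sub>R b) - f x)) \<longlonglongrightarrow> D b"
proof -
  have "linear D" using assms by (rule has_derivative_linear)
  have "((\<lambda>t::real. x + t *\<^sub>R b) has_derivative (\<lambda>t. t *\<^sub>R b)) (at 0)"
    by (auto intro!: derivative_eq_intros)
  moreover have "(f has_derivative D) (at (x + 0 *\<^sub>R b))" using assms by simp
  ultimately have "((\<lambda>t. f (x + t *\<^sub>R b)) has_derivative (\<lambda>t. D (t *\<^sub>R b))) (at 0)"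
    by (rule has_derivative_compose)
  moreover have "(\<lambda>t. D (t *\<^sub>R b)) = (*) (D b)"
    using \<open>linear D\<close> by (simp add: fun_eq_iff linear_scale)
  ultimately have "((\<lambda>t. f (x + t *\<^sub>R b)) has_real_derivative D b) (at 0)"
    by (simp add: has_field_derivative_def)
  then have "((\<lambda>t. (f (x + t *\<^sub>R b) - f x) / t) \<longlongrightarrow> D b) (at 0)"
    unfolding DERIV_def by simp
  then have "((\<lambda>t. (f (x + t *\<^sub>R b) - f x) / t) \<circ> (\<lambda>m. inverse (real (Suc m)))) \<longlonglongrightarrow> D b"
    unfolding tendsto_at_iff_sequentially using LIMSEQ_inverse_real_of_nat by auto
  then show ?thesis by (simp add: o_def divide_inverse mult.commute)
qed

section \<open>Measurability of the DSMS process\<close>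

lemma measurable_count_space_of_real:
  assumes "(\<lambda>w. real (f w :: nat)) \<in> borel_measurable N"
  shows "f \<in> N \<rightarrow>\<^sub>M count_space UNIV"
proof -
  have "f -` {a} \<inter> space N = (\<lambda>w. real (f w)) -` {real a} \<inter> space N" for a
    by auto
  then have "f -` {a} \<inter> space N \<in> sets N" for a
    using measurable_sets[OF assms, of "{real a}"] by simp
  then show ?thesis by (auto simp: measurable_count_space_eq2_countable)
qed

lemma measurable_fun_upd_apply:
  fixes Y :: "'w \<Rightarrow> 'i \<Rightarrow> 'b"
  assumes Y: "\<And>j. (\<lambda>w. Y w j) \<in> N \<rightarrow>\<^sub>M K"
    and z: "z \<in> N \<rightarrow>\<^sub>M K"
    and i: "i \<in> N \<rightarrow>\<^sub>M count_space UNIV"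
  shows "(\<lambda>w. ((Y w)(i w := z w)) a) \<in> N \<rightarrow>\<^sub>M K"
proof -
  have "{w \<in> space N. i w = a} \<in> sets N"
    using measurable_sets[OF i, of "{a}"] by (simp add: vimage_def Int_def conj_commute)
  then have "(\<lambda>w. if i w = a then z w else Y w a) \<in> N \<rightarrow>\<^sub>M K"
    by (intro measurable_If[where P="\<lambda>w. i w = a"]) (auto simp: Y z)
  then show ?thesis by (simp add: fun_upd_def eq_commute)
qed

lemma measurable_Lh_update:
  fixes Y :: "'w \<Rightarrow> nat \<Rightarrow> 'a::euclidean_space"
  assumes prof: "profile kp kp'"
    and h: "h \<in> borel_measurable N"
    and Y: "\<And>j. (\<lambda>w. Y w j) \<in> borel_measurable N"
    and z: "z \<in> borel_measurable N"
    and i: "i \<in> N \<rightarrow>\<^sub>M count_space UNIV"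
  shows "(\<lambda>w. Lh kp n (h w) ((Y w)(i w := z w))) \<in> borel_measurable N"
  unfolding Lh_def
proof (intro borel_measurable_sum)
  fix a c
  have "kern kp \<in> borel_measurable (borel :: 'a measure)"
    using differentiable_kern[OF prof]
    by (intro borel_measurable_continuous_onI differentiable_imp_continuous_on
        differentiable_at_imp_differentiable_on) auto
  moreover have "(\<lambda>w. (1 / h w) *\<^sub>R (((Y w)(i w := z w)) a - ((Y w)(i w := z w)) c)) \<in> borel_measurable N"
    using measurable_fun_upd_apply[OF Y z i] h by measurable
  ultimately show "(\<lambda>w. kern kp ((1 / h w) *\<^sub>R (((Y w)(i w := z w)) a - ((Y w)(i w := z w)) c))) \<in> borel_measurable N"
    by (rule measurable_compose[rotated])
qed

text \<open>Since \<^const>\<open>pgrad\<close> is defined by Hilbert choice, its measurability is obtained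
  coordinatewise, as a pointwise limit of measurable difference quotients.\<close>
lemma measurable_pgrad_Lh:
  fixes Y :: "'w \<Rightarrow> nat \<Rightarrow> 'a::euclidean_space"
  assumes prof: "profile kp kp'"
    and h: "h \<in> borel_measurable N"
    and Y: "\<And>j. (\<lambda>w. Y w j) \<in> borel_measurable N"
    and i: "i \<in> N \<rightarrow>\<^sub>M count_space UNIV"
  shows "(\<lambda>w. pgrad (Lh kp n (h w)) (Y w) (i w)) \<in> borel_measurable N"
proof -
  have Yi: "(\<lambda>w. Y w (i w)) \<in> borel_measurable N"
    by (rule measurable_compose_countable[OF Y i])
  have "(\<lambda>w. pgrad (Lh kp n (h w)) (Y w) (i w) \<bullet> b) \<in> borel_measurable N" for b
  proof (rule borel_measurable_LIMSEQ_real)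
    fix w
    show "(\<lambda>m. real (Suc m) * (Lh kp n (h w) ((Y w)(i w := Y w (i w) + inverse (real (Suc m)) *\<^sub>R b))
                               - Lh kp n (h w) ((Y w)(i w := Y w (i w)))))
       \<longlonglongrightarrow> pgrad (Lh kp n (h w)) (Y w) (i w) \<bullet> b"
      by (rule difference_quotient_LIMSEQ[OF has_derivative_pgrad[OF prof]])
  next
    fix m
    have "(\<lambda>w. Y w (i w) + inverse (real (Suc m)) *\<^sub>R b) \<in> borel_measurable N"
      using Yi by measurable
    then show "(\<lambda>w. real (Suc m) * (Lh kp n (h w) ((Y w)(i w := Y w (i w) + inverse (real (Suc m)) *\<^sub>R b))
                                   - Lh kp n (h w) ((Y w)(i w := Y w (i w))))) \<in> borel_measurable N"
      using measurable_Lh_update[OF prof h Y _ i] Yi by measurable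
  qed
  then have "(\<lambda>w. \<Sum>b\<in>Basis. (pgrad (Lh kp n (h w)) (Y w) (i w) \<bullet> b) *\<^sub>R b) \<in> borel_measurable N"
    by (intro borel_measurable_sum borel_measurable_scaleR) auto
  then show ?thesis by (simp add: euclidean_representation)
qed

lemma measurable_dsms:
  fixes X0 :: "nat \<Rightarrow> 'a::euclidean_space"
  assumes prof: "profile kp kp'"
    and U: "\<And>j. j \<le> k \<Longrightarrow> U j \<in> borel_measurable N"
    and I: "\<And>j. j < k \<Longrightarrow> I j \<in> N \<rightarrow>\<^sub>M count_space UNIV"
  shows "dsms_bw nu hmin hmax h1 U k \<in> borel_measurable N"
    and "(\<lambda>w. dsms_state kp' n nu hmin hmax h1 X0 U I k w a) \<in> borel_measurable N"
proof -
  have "dsms_bw nu hmin hmax h1 U k \<in> borel_measurable N \<and>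
    (\<forall>a. (\<lambda>w. dsms_state kp' n nu hmin hmax h1 X0 U I k w a) \<in> borel_measurable N)"
    using U I
  proof (induction k)
    case 0
    then show ?case by simp
  next
    case (Suc k)
    then have bw: "dsms_bw nu hmin hmax h1 U k \<in> borel_measurable N"
      and S: "\<And>a. (\<lambda>w. dsms_state kp' n nu hmin hmax h1 X0 U I k w a) \<in> borel_measurable N"
      and Ik: "I k \<in> N \<rightarrow>\<^sub>M count_space UNIV"
      by auto
    have "U (Suc k) \<in> borel_measurable N" using Suc.prems by simp
    with bw have "dsms_bw nu hmin hmax h1 U (Suc k) \<in> borel_measurable N"
      unfolding dsms_bw.simps dsms_delta_def by measurable
    moreover
    let ?S = "\<lambda>w. dsms_state kp' n nu hmin hmax h1 X0 U I k w"
    have Si: "(\<lambda>w. ?S w (I k w)) \<in> borel_measurable N"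
      by (rule measurable_compose_countable[OF S Ik])
    have "weight kp' \<in> borel_measurable (borel :: 'a measure)"
      by (rule borel_measurable_continuous_onI[OF continuous_on_weight[OF prof]])
    then have "(\<lambda>w. weight kp' ((1 / dsms_bw nu hmin hmax h1 U k w) *\<^sub>R (?S w (I k w) - ?S w j)))
        \<in> borel_measurable N" for j
      by (rule measurable_compose[rotated]) (use bw S Si in measurable)
    then have "(\<lambda>w. mean_shift kp' n (dsms_bw nu hmin hmax h1 U k w) (?S w (I k w)) (?S w))
        \<in> borel_measurable N"
      unfolding mean_shift_def using S
      by (intro borel_measurable_scaleR borel_measurable_sum borel_measurable_divide
          borel_measurable_const) auto
    from measurable_fun_upd_apply[OF S this Ik]
    have "(\<lambda>w. dsms_state kp' n nu hmin hmax h1 X0 U I (Suc k) w a) \<in> borel_measurable N" for a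
      by (simp add: Let_def)
    ultimately show ?case by blast
  qed
  then show "dsms_bw nu hmin hmax h1 U k \<in> borel_measurable N"
    and "(\<lambda>w. dsms_state kp' n nu hmin hmax h1 X0 U I k w a) \<in> borel_measurable N"
    by auto
qed

lemma measurable_dsms_pgrad:
  fixes X0 :: "nat \<Rightarrow> 'a::euclidean_space"
  assumes prof: "profile kp kp'"
    and "\<And>j. j \<le> k \<Longrightarrow> U j \<in> borel_measurable N"
    and "\<And>j. j < k \<Longrightarrow> I j \<in> N \<rightarrow>\<^sub>M count_space UNIV"
    and "i \<in> N \<rightarrow>\<^sub>M count_space UNIV"
  shows "(\<lambda>w. pgrad (Lh kp n (dsms_bw nu hmin hmax h1 U k w))
                    (dsms_state kp' n nu hmin hmax h1 X0 U I k w) (i w)) \<in> borel_measurable N"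
  using assms by (intro measurable_pgrad_Lh measurable_dsms)

section \<open>Counting hits\<close>

lemma hit_time_Suc_counts:
  "(hit_time hit (Suc q) = enat m \<longrightarrow> hit m \<and> card {k. k < m \<and> hit k} = q) \<and>
   (hit_time hit (Suc q) = \<infinity> \<longrightarrow> (\<forall>N. card {k. k < N \<and> hit k} \<le> q))"
proof (induction q arbitrary: m)
  case 0
  show ?case
  proof (cases "\<exists>k. hit k")
    case True
    have "hit (LEAST k. hit k)" using True by (rule LeastI_ex)
    moreover have "{k. k < (LEAST k. hit k) \<and> hit k} = {}" using not_less_Least by blast
    ultimately show ?thesis using True by auto
  qed auto
next
  case (Suc q)
  show ?case
  proof (cases "hit_time hit (Suc q)")
    case (enat m0)
    with Suc.IH have m0: "hit m0" "card {k. k < m0 \<and> hit k} = q" by auto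
    show ?thesis
    proof (cases "\<exists>k>m0. hit k")
      case True
      let ?m = "LEAST k. m0 < k \<and> hit k"
      have m: "m0 < ?m" "hit ?m" using LeastI_ex[OF True[unfolded Bex_def]] by auto
      have "{k. k < ?m \<and> hit k} = insert m0 {k. k < m0 \<and> hit k}"
        using m m0 not_less_Least[of _ "\<lambda>k. m0 < k \<and> hit k"] by (auto simp: not_less_iff_gr_or_eq)
      with m0 have "card {k. k < ?m \<and> hit k} = Suc q" by simp
      then show ?thesis using enat True m by auto
    next
      case False
      have "card {k. k < N \<and> hit k} \<le> Suc q" for N
      proof -
        have "card {k. k < N \<and> hit k} \<le> card (insert m0 {k. k < m0 \<and> hit k})"
          using False by (intro card_mono) (auto simp: not_less_iff_gr_or_eq)
        also have "\<dots> \<le> Suc q" using m0 by (simp add: card_insert_if)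
        finally show ?thesis .
      qed
      then show ?thesis using enat False by auto
    qed
  next
    case infinity
    with Suc.IH show ?thesis by (auto intro: le_SucI)
  qed
qed

lemma hit_time_finite_iff:
  "hit_time hit q < \<infinity> \<longleftrightarrow> (\<exists>N. q \<le> card {k. k < N \<and> hit k})"
proof (cases q)
  case 0
  then show ?thesis by (simp add: zero_enat_def)
next
  case (Suc q')
  show ?thesis
  proof
    assume "hit_time hit q < \<infinity>"
    then obtain m where "hit_time hit (Suc q') = enat m" using Suc by (cases "hit_time hit q") auto
    then have "hit m" "card {k. k < m \<and> hit k} = q'" using hit_time_Suc_counts by blast+
    moreover have "{k. k < Suc m \<and> hit k} = insert m {k. k < m \<and> hit k}"
      using \<open>hit m\<close> by (auto simp: less_Suc_eq)
    ultimately have "card {k. k < Suc m \<and> hit k} = q" using Suc by simp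
    then show "\<exists>N. q \<le> card {k. k < N \<and> hit k}" by (metis order_refl)
  next
    assume "\<exists>N. q \<le> card {k. k < N \<and> hit k}"
    then obtain N where "Suc q' \<le> card {k. k < N \<and> hit k}" using Suc by blast
    then have "hit_time hit (Suc q') \<noteq> \<infinity>"
      using hit_time_Suc_counts[of hit q'] by (meson not_less_eq_eq)
    then show "hit_time hit q < \<infinity>" using Suc by (simp add: less_le)
  qed
qed

lemma card_window_Suc:
  "card {j\<in>{k..<k + Suc d}. P j} = (if P k then 1 else 0) + card {j\<in>{Suc k..<Suc k + d}. P j}"
proof -
  have "{k..<k + Suc d} = insert k {Suc k..<Suc k + d}" by auto
  then have "{j\<in>{k..<k + Suc d}. P j} = (if P k then insert k {j\<in>{Suc k..<Suc k + d}. P j} else {j\<in>{Suc k..<Suc k + d}. P j})"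
    by auto
  then show ?thesis by simp
qed

lemma card_prefix_le_card_window:
  "card {k. k < N \<and> P k} \<le> k0 + card {k\<in>{k0..<k0 + N}. P k}"
proof -
  have "card {k. k < N \<and> P k} \<le> card ({..<k0} \<union> {k\<in>{k0..<k0 + N}. P k})"
    by (intro card_mono) auto
  also have "\<dots> \<le> k0 + card {k\<in>{k0..<k0 + N}. P k}"
    using card_Un_le[of "{..<k0}"] by simp
  finally show ?thesis .
qed

lemma incseq_window_hits_all_good:
  "incseq (\<lambda>d. {w\<in>S. p \<le> card {j\<in>{k0..<k0 + d}. H j w} \<and> (\<forall>j\<ge>k0. G j w)})"
proof (rule incseq_SucI, rule subsetI)
  fix d w assume w: "w \<in> {w\<in>S. p \<le> card {j\<in>{k0..<k0 + d}. H j w} \<and> (\<forall>j\<ge>k0. G j w)}"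
  have "card {j\<in>{k0..<k0 + d}. H j w} \<le> card {j\<in>{k0..<k0 + Suc d}. H j w}"
    by (rule card_mono) auto
  with w show "w \<in> {w\<in>S. p \<le> card {j\<in>{k0..<k0 + Suc d}. H j w} \<and> (\<forall>j\<ge>k0. G j w)}"
    by auto
qed

lemma many_hits_all_good_subset_windows:
  "{w\<in>S. (\<exists>N. k0 + p \<le> card {k. k < N \<and> H k w}) \<and> (\<forall>k\<ge>k0. G k w)}
     \<subseteq> (\<Union>d. {w\<in>S. p \<le> card {j\<in>{k0..<k0 + d}. H j w} \<and> (\<forall>j\<ge>k0. G j w)})"
proof
  fix w assume "w \<in> {w\<in>S. (\<exists>N. k0 + p \<le> card {k. k < N \<and> H k w}) \<and> (\<forall>k\<ge>k0. G k w)}"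
  then obtain N where "k0 + p \<le> card {k. k < N \<and> H k w}" "w \<in> S" "\<forall>k\<ge>k0. G k w"
    by blast
  with card_prefix_le_card_window[of N "\<lambda>k. H k w" k0]
  have "w \<in> {w\<in>S. p \<le> card {j\<in>{k0..<k0 + N}. H j w} \<and> (\<forall>j\<ge>k0. G j w)}"
    by simp
  then show "w \<in> (\<Union>d. {w\<in>S. p \<le> card {j\<in>{k0..<k0 + d}. H j w} \<and> (\<forall>j\<ge>k0. G j w)})"
    by blast
qed

lemma sets_Collect_card_ge:
  assumes "finite A" and H: "\<And>k. k \<in> A \<Longrightarrow> {w\<in>space M. H k w} \<in> sets M"
  shows "{w\<in>space M. q \<le> card {k\<in>A. H k w}} \<in> sets M"
proof -
  let ?S = "{S. S \<subseteq> A \<and> card S = q}"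
  have "q \<le> card {k\<in>A. H k w} \<longleftrightarrow> (\<exists>S\<in>?S. \<forall>k\<in>S. H k w)" for w
  proof
    assume "q \<le> card {k\<in>A. H k w}"
    then obtain S where "S \<subseteq> {k\<in>A. H k w}" "card S = q" by (rule obtain_subset_with_card_n)
    then show "\<exists>S\<in>?S. \<forall>k\<in>S. H k w" by auto
  next
    assume "\<exists>S\<in>?S. \<forall>k\<in>S. H k w"
    then obtain S where "S \<subseteq> {k\<in>A. H k w}" "card S = q" by auto
    with card_mono[OF _ this(1)] \<open>finite A\<close> show "q \<le> card {k\<in>A. H k w}" by simp
  qed
  moreover have "finite ?S"
    using \<open>finite A\<close> by (rule finite_subset[rotated, OF finite_Pow_iff[THEN iffD2]]) auto
  then have "{w\<in>space M. \<exists>S\<in>?S. \<forall>k\<in>S. H k w} \<in> sets M"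
  proof (rule sets.sets_Collect_finite_Ex[rotated])
    fix S assume "S \<in> ?S"
    with H show "{w\<in>space M. \<forall>k\<in>S. H k w} \<in> sets M"
      by (intro sets.sets_Collect_countable_All') (auto intro: countable_finite finite_subset[OF _ \<open>finite A\<close>])
  qed
  ultimately show ?thesis by simp
qed

lemma sets_Collect_all_ge:
  fixes k :: nat
  assumes G: "\<And>j. {w\<in>space M. G j w} \<in> sets M"
  shows "{w\<in>space M. \<forall>j\<ge>k. G j w} \<in> sets M"
proof -
  have "{w\<in>space M. k \<le> j \<longrightarrow> G j w} \<in> sets M" for j
    using G[of j] by (cases "k \<le> j") auto
  then show ?thesis by (rule sets.sets_Collect_countable_All)
qed

lemma events_window_hits_all_good:
  fixes k d p :: nat
  assumes H: "\<And>j. {w\<in>space M. H j w} \<in> sets M" and G: "\<And>j. {w\<in>space M. G j w} \<in> sets M"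
  shows "{w\<in>space M. p \<le> card {j\<in>{k..<k + d}. H j w} \<and> (\<forall>j\<ge>k. G j w)} \<in> sets M"
proof (rule sets.sets_Collect_conj)
  show "{w\<in>space M. p \<le> card {j\<in>{k..<k + d}. H j w}} \<in> sets M"
    using H by (intro sets_Collect_card_ge) auto
  show "{w\<in>space M. \<forall>j\<ge>k. G j w} \<in> sets M"
    using G by (rule sets_Collect_all_ge)
qed

lemma events_many_hits_all_good:
  fixes H G :: "nat \<Rightarrow> 'a \<Rightarrow> bool" and q k0 :: nat
  assumes H: "\<And>k. {w\<in>space M. H k w} \<in> sets M" and G: "\<And>k. {w\<in>space M. G k w} \<in> sets M"
  shows "{w\<in>space M. (\<exists>N. q \<le> card {k. k < N \<and> H k w}) \<and> (\<forall>k\<ge>k0. G k w)} \<in> sets M"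
proof -
  have "{w\<in>space M. q \<le> card {k. k < N \<and> H k w}} \<in> sets M" for N :: nat
  proof -
    have "{w\<in>space M. q \<le> card {k\<in>{..<N}. H k w}} \<in> sets M"
      by (rule sets_Collect_card_ge) (simp_all add: H)
    then show ?thesis by (simp only: lessThan_iff)
  qed
  then have "{w\<in>space M. \<exists>N. q \<le> card {k. k < N \<and> H k w}} \<in> sets M"
    by (rule sets.sets_Collect_countable_Ex)
  with sets_Collect_all_ge[OF G] show ?thesis
    by (rule sets.sets_Collect_conj)
qed

section \<open>Hits missed by a uniformly chosen coordinate\<close>

lemma (in prob_space) prob_UN_Diff_uniform_index:
  fixes D :: "nat \<Rightarrow> 'a set" and I :: "'a \<Rightarrow> nat"
  assumes disj: "disjoint_family_on D {..<n}"
    and D: "\<And>m. m < n \<Longrightarrow> D m \<in> events"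
    and I: "I \<in> M \<rightarrow>\<^sub>M count_space UNIV"
    and indep: "\<And>m. m < n \<Longrightarrow> prob (D m \<inter> {w\<in>space M. I w = m}) = prob (D m) / n"
  shows "prob (\<Union>m<n. D m - {w\<in>space M. I w = m}) = (1 - 1 / n) * prob (\<Union>m<n. D m)"
proof -
  have Q: "{w\<in>space M. I w = m} \<in> events" for m
    using I by measurable
  have "prob (\<Union>m<n. D m - {w\<in>space M. I w = m}) = (\<Sum>m<n. prob (D m - {w\<in>space M. I w = m}))"
    using disj D Q
    by (intro finite_measure_finite_Union) (auto simp: disjoint_family_on_def)
  also have "\<dots> = (\<Sum>m<n. (1 - 1 / n) * prob (D m))"
  proof (rule sum.cong[OF refl])
    fix m assume "m \<in> {..<n}"
    then have "prob (D m - {w\<in>space M. I w = m}) = prob (D m) - prob (D m) / n"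
      using finite_measure_Diff'[OF D Q] indep by simp
    then show "prob (D m - {w\<in>space M. I w = m}) = (1 - 1 / n) * prob (D m)"
      by (simp add: algebra_simps)
  qed
  also have "\<dots> = (1 - 1 / n) * prob (\<Union>m<n. D m)"
    using disj D by (subst finite_measure_finite_Union) (auto simp: sum_distrib_left)
  finally show ?thesis .
qed

text \<open>Split the event that some score reaches \<open>\<epsilon>\<close> according to the least such
  coordinate \<open>m\<close>; the uniform index avoids a large score only if it differs from \<open>m\<close>.\<close>
lemma (in prob_space) prob_uniform_index_misses_le:
  fixes F :: "'a measure" and g :: "nat \<Rightarrow> 'a \<Rightarrow> real" and I :: "'a \<Rightarrow> nat"
    and n :: nat and \<epsilon> :: real
  assumes F: "subalgebra M F"
    and g: "\<And>j. g j \<in> borel_measurable F"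
    and I: "I \<in> M \<rightarrow>\<^sub>M count_space UNIV"
    and indep: "\<And>C m. C \<in> sets F \<Longrightarrow> m < n \<Longrightarrow> prob (C \<inter> {w\<in>space M. I w = m}) = prob C / n"
    and C: "C \<in> sets F"
  shows "prob (C \<inter> {w\<in>space M. (\<exists>j<n. \<epsilon> \<le> g j w) \<and> g (I w) w < \<epsilon>})
    \<le> (1 - 1 / n) * prob (C \<inter> {w\<in>space M. \<exists>j<n. \<epsilon> \<le> g j w})"
proof -
  define D where "D m = C \<inter> {w\<in>space M. \<epsilon> \<le> g m w \<and> (\<forall>j<m. g j w < \<epsilon>)}" for m
  have "{w\<in>space F. \<epsilon> \<le> g m w \<and> (\<forall>j<m. g j w < \<epsilon>)} \<in> sets F" for m
    using g by measurable
  then have D_F: "D m \<in> sets F" for m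
    using C F by (auto simp: D_def subalgebra_def)
  then have D_events: "D m \<in> events" for m
    using F by (auto simp: subalgebra_def)
  have hits: "C \<inter> {w\<in>space M. \<exists>j<n. \<epsilon> \<le> g j w} = (\<Union>m<n. D m)"
  proof (intro set_eqI iffI)
    fix w assume w: "w \<in> C \<inter> {w\<in>space M. \<exists>j<n. \<epsilon> \<le> g j w}"
    then obtain j where "j < n" "\<epsilon> \<le> g j w" by blast
    define m where "m = (LEAST j. \<epsilon> \<le> g j w)"
    have "\<epsilon> \<le> g m w" "m \<le> j"
      unfolding m_def using \<open>\<epsilon> \<le> g j w\<close> by (auto intro: LeastI Least_le)
    moreover have "g i w < \<epsilon>" if "i < m" for i
      using not_less_Least[OF that[unfolded m_def]] by simp
    ultimately show "w \<in> (\<Union>m<n. D m)"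
      using w \<open>j < n\<close> unfolding D_def by (intro UN_I[of m]) auto
  qed (unfold D_def, blast)
  have "D m \<inter> D m' = {}" if "m < m'" for m m'
    using that unfolding D_def by (auto simp: not_le[symmetric])
  then have "disjoint_family_on D {..<n}"
    unfolding disjoint_family_on_def by (metis Int_commute linorder_neqE_nat)
  moreover have "C \<inter> {w\<in>space M. (\<exists>j<n. \<epsilon> \<le> g j w) \<and> g (I w) w < \<epsilon>}
      \<subseteq> (\<Union>m<n. D m - {w\<in>space M. I w = m})"
  proof
    fix w assume w: "w \<in> C \<inter> {w\<in>space M. (\<exists>j<n. \<epsilon> \<le> g j w) \<and> g (I w) w < \<epsilon>}"
    then obtain m where "m < n" "w \<in> D m" using hits by blast
    moreover from this w have "I w \<noteq> m" unfolding D_def by auto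
    ultimately show "w \<in> (\<Union>m<n. D m - {w\<in>space M. I w = m})" by blast
  qed
  moreover have "{w\<in>space M. I w = m} \<in> events" for m
    using I by measurable
  ultimately have "prob (C \<inter> {w\<in>space M. (\<exists>j<n. \<epsilon> \<le> g j w) \<and> g (I w) w < \<epsilon>})
      \<le> prob (\<Union>m<n. D m - {w\<in>space M. I w = m})"
    using D_events by (intro finite_measure_mono) auto
  also have "\<dots> = (1 - 1 / n) * prob (\<Union>m<n. D m)"
    using \<open>disjoint_family_on D {..<n}\<close> D_events I indep[OF D_F]
    by (rule prob_UN_Diff_uniform_index)
  finally show ?thesis unfolding hits .
qed

lemma window_hits_all_good_Suc:
  "{w\<in>S. p \<le> card {j\<in>{k..<k + Suc d}. H j w} \<and> (\<forall>j\<ge>k. G j w)} =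
     {w\<in>S. H k w \<and> G k w} \<inter> {w\<in>S. p - 1 \<le> card {j\<in>{Suc k..<Suc k + d}. H j w} \<and> (\<forall>j\<ge>Suc k. G j w)}
   \<union> {w\<in>S. \<not> H k w \<and> G k w} \<inter> {w\<in>S. p \<le> card {j\<in>{Suc k..<Suc k + d}. H j w} \<and> (\<forall>j\<ge>Suc k. G j w)}"
proof -
  have "(\<forall>j\<ge>k. G j w) \<longleftrightarrow> G k w \<and> (\<forall>j\<ge>Suc k. G j w)" for w
    by (metis Suc_le_eq le_eq_less_or_eq order_refl)
  then show ?thesis unfolding card_window_Suc by auto
qed

lemma power_diff_one_mult_le:
  fixes r a b :: real
  assumes "0 \<le> r" "a \<le> b" "a \<le> r * b"
  shows "r ^ (p - 1) * a \<le> r ^ p * b"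
proof (cases p)
  case (Suc p')
  have "r ^ p' * a \<le> r ^ p' * (r * b)"
    using assms by (intro mult_left_mono) auto
  then show ?thesis using Suc by (simp add: ac_simps)
qed (use assms in simp)

text \<open>Induction on the window length, splitting on the first time \<open>k\<close>: a hit at
  time \<open>k\<close> that is followed by \<open>G k\<close> costs a factor \<open>r\<close>.\<close>
lemma (in prob_space) prob_window_hits_all_good_le:
  fixes F :: "nat \<Rightarrow> 'a measure" and H G :: "nat \<Rightarrow> 'a \<Rightarrow> bool" and r :: real
  assumes F: "\<And>k. subalgebra M (F k)" "\<And>k. sets (F k) \<subseteq> sets (F (Suc k))"
    and H: "\<And>k. {w\<in>space M. H k w} \<in> sets (F k)"
    and G: "\<And>k. {w\<in>space M. G k w} \<in> sets (F (Suc k))"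
    and step: "\<And>k C. C \<in> sets (F k) \<Longrightarrow>
      prob (C \<inter> {w\<in>space M. H k w \<and> G k w}) \<le> r * prob (C \<inter> {w\<in>space M. H k w})"
    and r: "0 \<le> r"
  shows "C \<in> sets (F k) \<Longrightarrow>
    prob (C \<inter> {w\<in>space M. p \<le> card {j\<in>{k..<k + d}. H j w} \<and> (\<forall>j\<ge>k. G j w)}) \<le> r ^ p * prob C"
proof (induction d arbitrary: p k C)
  case 0
  then have "C \<in> events" using F(1) by (auto simp: subalgebra_def)
  show ?case
  proof (cases p)
    case 0
    then show ?thesis using \<open>C \<in> events\<close> by (simp add: finite_measure_mono)
  qed (simp add: r)
next
  case (Suc d)
  let ?W = "\<lambda>p k. {w\<in>space M. p \<le> card {j\<in>{k..<k + d}. H j w} \<and> (\<forall>j\<ge>k. G j w)}"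
  let ?H = "{w\<in>space M. H k w}"
  let ?HG = "{w\<in>space M. H k w \<and> G k w}" and ?NG = "{w\<in>space M. \<not> H k w \<and> G k w}"
  have ev: "A \<in> sets (F j) \<Longrightarrow> A \<in> events" for A j using F(1) by (auto simp: subalgebra_def)
  have Hev: "{w\<in>space M. H j w} \<in> events" and Gev: "{w\<in>space M. G j w} \<in> events" for j
    using ev[OF H] ev[OF G] by auto
  have W: "?W p' k' \<in> events" for p' k'
    using events_window_hits_all_good[OF Hev Gev] .
  have C: "C \<in> events" using ev[OF Suc.prems] .
  have "?HG = ?H \<inter> {w\<in>space M. G k w}" and "?NG = {w\<in>space M. G k w} - ?H" by auto
  then have CHG: "C \<inter> ?HG \<in> sets (F (Suc k))" and CNG: "C \<inter> ?NG \<in> sets (F (Suc k))"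
    using Suc.prems F(2) H[of k] G[of k] by (auto intro!: sets.Int sets.Diff)
  have "prob (C \<inter> {w\<in>space M. p \<le> card {j\<in>{k..<k + Suc d}. H j w} \<and> (\<forall>j\<ge>k. G j w)})
      \<le> prob (C \<inter> ?HG \<inter> ?W (p - 1) (Suc k)) + prob (C \<inter> ?NG \<inter> ?W p (Suc k))"
    unfolding window_hits_all_good_Suc Int_Un_distrib Int_assoc[symmetric]
    by (rule measure_subadditive[OF sets.Int[OF ev[OF CHG] W[of "p - 1" "Suc k"]]
          sets.Int[OF ev[OF CNG] W[of p "Suc k"]]]) (simp_all add: emeasure_finite)
  also have "\<dots> \<le> r ^ (p - 1) * prob (C \<inter> ?HG) + r ^ p * prob (C \<inter> ?NG)"
    using Suc.IH[OF CHG, of "p - 1"] Suc.IH[OF CNG, of p] by (simp add: Int_assoc)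
  also have "\<dots> \<le> r ^ p * prob (C \<inter> ?H) + r ^ p * prob (C - ?H)"
  proof (rule add_mono)
    show "r ^ (p - 1) * prob (C \<inter> ?HG) \<le> r ^ p * prob (C \<inter> ?H)"
      using C Hev[of k] r step[OF Suc.prems]
      by (intro power_diff_one_mult_le finite_measure_mono) auto
    show "r ^ p * prob (C \<inter> ?NG) \<le> r ^ p * prob (C - ?H)"
      using C Hev[of k] r by (intro mult_left_mono finite_measure_mono) auto
  qed
  also have "\<dots> = r ^ p * prob C"
    using finite_measure_Diff'[OF C Hev[of k]] by (simp add: distrib_left[symmetric])
  finally show ?case .
qed

lemma (in prob_space) prob_many_hits_all_good_le:
  fixes F :: "nat \<Rightarrow> 'a measure" and H G :: "nat \<Rightarrow> 'a \<Rightarrow> bool" and r :: real and k0 p :: nat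
  assumes F: "\<And>k. subalgebra M (F k)" "\<And>k. sets (F k) \<subseteq> sets (F (Suc k))"
    and H: "\<And>k. {w\<in>space M. H k w} \<in> sets (F k)"
    and G: "\<And>k. {w\<in>space M. G k w} \<in> sets (F (Suc k))"
    and step: "\<And>k C. C \<in> sets (F k) \<Longrightarrow>
      prob (C \<inter> {w\<in>space M. H k w \<and> G k w}) \<le> r * prob (C \<inter> {w\<in>space M. H k w})"
    and r: "0 \<le> r"
  defines "E \<equiv> {w\<in>space M. (\<exists>N. k0 + p \<le> card {k. k < N \<and> H k w}) \<and> (\<forall>k\<ge>k0. G k w)}"
  shows "E \<in> events \<and> prob E \<le> r ^ p"
proof -
  have ev: "A \<in> sets (F j) \<Longrightarrow> A \<in> events" for A j using F(1) by (auto simp: subalgebra_def)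
  have Hev: "{w\<in>space M. H j w} \<in> events" and Gev: "{w\<in>space M. G j w} \<in> events" for j
    using ev[OF H] ev[OF G] by auto
  have "E \<in> events"
    unfolding E_def using Hev Gev by (rule events_many_hits_all_good)
  define W where "W d = {w\<in>space M. p \<le> card {j\<in>{k0..<k0 + d}. H j w} \<and> (\<forall>j\<ge>k0. G j w)}" for d
  have W: "W d \<in> events" for d
    unfolding W_def using Hev Gev by (rule events_window_hits_all_good)
  have "incseq W"
    unfolding W_def by (rule incseq_window_hits_all_good)
  have "E \<subseteq> (\<Union>d. W d)"
    unfolding E_def W_def by (rule many_hits_all_good_subset_windows)
  moreover have "(\<Union>d. W d) \<in> events"
    using W by (intro sets.countable_UN) auto
  ultimately have "prob E \<le> prob (\<Union>d. W d)"
    by (rule finite_measure_mono)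
  also have "\<dots> \<le> r ^ p"
  proof -
    have "space (F k0) = space M"
      using F(1)[of k0] by (simp add: subalgebra_def)
    then have "space M \<in> sets (F k0)"
      using sets.top[of "F k0"] by simp
    have "prob (W d) \<le> r ^ p" for d
      using prob_window_hits_all_good_le[OF F H G step r \<open>space M \<in> sets (F k0)\<close>, of p d]
      unfolding W_def by (simp add: Int_absorb1 prob_space)
    moreover have "(\<lambda>d. prob (W d)) \<longlonglongrightarrow> prob (\<Union>d. W d)"
      using W \<open>incseq W\<close> by (intro finite_Lim_measure_incseq) auto
    ultimately show ?thesis
      by (intro LIMSEQ_le_const2) auto
  qed
  finally show ?thesis using \<open>E \<in> events\<close> by simp
qed

lemma (in prob_space) prob_many_hits_uniform_index_misses_le:
  fixes F :: "nat \<Rightarrow> 'a measure" and g :: "nat \<Rightarrow> nat \<Rightarrow> 'a \<Rightarrow> real"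
    and I :: "nat \<Rightarrow> 'a \<Rightarrow> nat" and n k0 p :: nat and \<epsilon> :: real
  assumes F: "\<And>k. subalgebra M (F k)" "\<And>k. sets (F k) \<subseteq> sets (F (Suc k))"
    and g: "\<And>k j. g k j \<in> borel_measurable (F k)"
    and g_I: "\<And>k. (\<lambda>w. g k (I k w) w) \<in> borel_measurable (F (Suc k))"
    and I: "\<And>k. I k \<in> M \<rightarrow>\<^sub>M count_space UNIV"
    and indep: "\<And>k C m. C \<in> sets (F k) \<Longrightarrow> m < n \<Longrightarrow>
      prob (C \<inter> {w\<in>space M. I k w = m}) = prob C / n"
  defines "E \<equiv> {w\<in>space M. (\<exists>N. k0 + p \<le> card {k. k < N \<and> (\<exists>j<n. \<epsilon> \<le> g k j w)})
                            \<and> (\<forall>k\<ge>k0. g k (I k w) w < \<epsilon>)}"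
  shows "E \<in> events \<and> prob E \<le> (1 - 1 / n) ^ p"
proof -
  have space_F: "space (F k) = space M" for k
    using F(1) by (simp add: subalgebra_def)
  have "{w\<in>space (F k). \<exists>j<n. \<epsilon> \<le> g k j w} \<in> sets (F k)" for k
    using g by measurable
  then have H: "{w\<in>space M. \<exists>j<n. \<epsilon> \<le> g k j w} \<in> sets (F k)" for k
    by (simp only: space_F)
  have "{w\<in>space (F (Suc k)). g k (I k w) w < \<epsilon>} \<in> sets (F (Suc k))" for k
    using g_I by measurable
  then have G: "{w\<in>space M. g k (I k w) w < \<epsilon>} \<in> sets (F (Suc k))" for k
    by (simp only: space_F)
  have step: "prob (C \<inter> {w\<in>space M. (\<exists>j<n. \<epsilon> \<le> g k j w) \<and> g k (I k w) w < \<epsilon>})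
      \<le> (1 - 1 / n) * prob (C \<inter> {w\<in>space M. \<exists>j<n. \<epsilon> \<le> g k j w})" if "C \<in> sets (F k)" for k C
    using F(1) g I indep that by (rule prob_uniform_index_misses_le)
  have "0 \<le> 1 - 1 / real n"
    by (cases n) (simp_all add: field_simps)
  from prob_many_hits_all_good_le[where F=F, OF F H G step this] show ?thesis
    unfolding E_def .
qed

section \<open>The filtration of the DSMS run\<close>

lemma (in prob_space) indep_sigma_sets_vars:
  fixes X :: "'i \<Rightarrow> 'a \<Rightarrow> 'b"
  assumes indep: "indep_vars N X K" and J: "J \<subseteq> K" "i \<in> K" "i \<notin> J"
    and C: "C \<in> sigma_sets (space M) (\<Union>j\<in>J. {X j -` B \<inter> space M | B. B \<in> sets (N j)})"
    and A: "A \<in> sets (N i)"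
  shows "prob (C \<inter> (X i -` A \<inter> space M)) = prob C * prob (X i -` A \<inter> space M)"
proof -
  define E where "E j = {X j -` B \<inter> space M | B. B \<in> sets (N j)}" for j
  define L where "L b = (if b then J else {i})" for b
  have "indep_sets E K"
    using indep unfolding indep_vars_def2 E_def by auto
  have "indep_sets E (\<Union>b. L b)"
    by (rule indep_sets_mono_index[OF _ \<open>indep_sets E K\<close>]) (use J in \<open>simp add: L_def\<close>)
  then have "indep_sets (\<lambda>b. sigma_sets (space M) (\<Union>j\<in>L b. E j)) UNIV"
  proof (rule indep_sets_collect_sigma)
    show "Int_stable (E j)" for j
      unfolding Int_stable_def E_def
      by (auto, metis sets.Int vimage_Int Int_assoc Int_left_commute Int_absorb)
    show "disjoint_family_on L UNIV"
      unfolding disjoint_family_on_def L_def using J by (simp add: UNIV_bool)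
  qed
  moreover have "C \<in> sigma_sets (space M) (\<Union>j\<in>L True. E j)"
    using C by (simp only: L_def E_def if_True)
  moreover have "X i -` A \<inter> space M \<in> sigma_sets (space M) (\<Union>j\<in>L False. E j)"
    using A unfolding L_def E_def by (intro sigma_sets.Basic) auto
  ultimately have "prob (\<Inter>b\<in>UNIV. if b then C else X i -` A \<inter> space M)
      = (\<Prod>b\<in>UNIV. prob (if b then C else X i -` A \<inter> space M))"
    by (intro indep_setsD) auto
  then show ?thesis by (simp add: UNIV_bool Int_commute)
qed

lemma (in prob_space) filtration_of_indep_sequences:
  fixes U :: "nat \<Rightarrow> 'a \<Rightarrow> real" and I :: "nat \<Rightarrow> 'a \<Rightarrow> nat"
  assumes indep: "indep_vars (\<lambda>_. borel) (\<lambda>x. case x of Inl k \<Rightarrow> U k | Inr k \<Rightarrow> (\<lambda>w. real (I k w))) UNIV"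
  obtains F :: "nat \<Rightarrow> 'a measure"
  where "\<And>k. subalgebra M (F k)" and "\<And>k. sets (F k) \<subseteq> sets (F (Suc k))"
    and "\<And>j k. j \<le> k \<Longrightarrow> U j \<in> borel_measurable (F k)"
    and "\<And>j k. j < k \<Longrightarrow> I j \<in> F k \<rightarrow>\<^sub>M count_space UNIV"
    and "\<And>k C m. C \<in> sets (F k) \<Longrightarrow>
           prob (C \<inter> {w\<in>space M. I k w = m}) = prob C * prob {w\<in>space M. I k w = m}"
proof -
  define X where "X = (\<lambda>x. case x of Inl k \<Rightarrow> U k | Inr k \<Rightarrow> (\<lambda>w. real (I k w)))"
  define E where "E J = (\<Union>j\<in>J. {X j -` B \<inter> space M | B. B \<in> sets (borel :: real measure)})" for J
  define J where "J k = Inl ` {..k} \<union> Inr ` {..<k}" for k :: nat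
  define F where "F k = sigma (space M) (E (J k))" for k
  have "E J' \<subseteq> Pow (space M)" for J' by (auto simp: E_def)
  then have sets_F: "sets (F k) = sigma_sets (space M) (E (J k))"
    and space_F: "space (F k) = space M" for k
    unfolding F_def by (simp_all add: sets_measure_of space_measure_of)
  have "X j \<in> borel_measurable M" for j
    using indep[folded X_def] unfolding indep_vars_def2 by simp
  then have "E (J k) \<subseteq> events" for k
    unfolding E_def by (blast intro: measurable_sets)
  then have sub: "subalgebra M (F k)" for k
    unfolding subalgebra_def sets_F space_F by (simp add: sets.sigma_sets_subset)
  have mono: "sets (F k) \<subseteq> sets (F (Suc k))" for k
  proof -
    have "J k \<subseteq> J (Suc k)" by (auto simp: J_def)
    then have "E (J k) \<subseteq> E (J (Suc k))" unfolding E_def by blast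
    then show ?thesis unfolding sets_F by (rule sigma_sets_mono')
  qed
  have X_F: "X j \<in> borel_measurable (F k)" if "j \<in> J k" for j k
  proof (rule measurableI)
    fix B :: "real set" assume "B \<in> sets borel"
    then have "X j -` B \<inter> space M \<in> E (J k)" using that unfolding E_def by blast
    then show "X j -` B \<inter> space (F k) \<in> sets (F k)"
      unfolding sets_F space_F by (rule sigma_sets.Basic)
  qed simp
  have U_F: "U j \<in> borel_measurable (F k)" if "j \<le> k" for j k
    using X_F[of "Inl j" k] that by (simp add: J_def X_def)
  have I_F: "I j \<in> F k \<rightarrow>\<^sub>M count_space UNIV" if "j < k" for j k
    using X_F[of "Inr j" k] that by (intro measurable_count_space_of_real) (simp add: J_def X_def)
  have indep_F: "prob (C \<inter> {w\<in>space M. I k w = m}) = prob C * prob {w\<in>space M. I k w = m}"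
    if "C \<in> sets (F k)" for k C m
  proof -
    have "Inr k \<notin> J k" by (auto simp: J_def)
    from indep_sigma_sets_vars[OF indep[folded X_def] subset_UNIV UNIV_I this
        that[unfolded sets_F E_def], of "{real m}"]
    have "prob (C \<inter> (X (Inr k) -` {real m} \<inter> space M))
        = prob C * prob (X (Inr k) -` {real m} \<inter> space M)"
      by simp
    moreover have "X (Inr k) -` {real m} \<inter> space M = {w\<in>space M. I k w = m}"
      by (auto simp: X_def)
    ultimately show ?thesis by simp
  qed
  show ?thesis by (rule that[of F, OF sub mono U_F I_F indep_F])
qed

lemma (in prob_space) prob_dsms_gradient_misses_le:
  fixes U :: "nat \<Rightarrow> 'a \<Rightarrow> real" and I :: "nat \<Rightarrow> 'a \<Rightarrow> nat"
    and X0 :: "nat \<Rightarrow> 'b::euclidean_space" and nu :: "nat \<Rightarrow> real"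
    and hmin hmax h1 \<epsilon> :: real and n k0 p :: nat
  assumes prof: "profile kp kp'"
    and indep: "indep_vars (\<lambda>_. borel) (\<lambda>x. case x of Inl k \<Rightarrow> U k | Inr k \<Rightarrow> (\<lambda>w. real (I k w))) UNIV"
    and I_unif: "\<And>k j. j < n \<Longrightarrow> prob {w\<in>space M. I k w = j} = 1 / n"
  defines "g \<equiv> \<lambda>k j w. norm (pgrad (Lh kp n (dsms_bw nu hmin hmax h1 U k w))
                                  (dsms_state kp' n nu hmin hmax h1 X0 U I k w) j)"
  defines "E \<equiv> {w\<in>space M. \<exists>N. k0 + p \<le> card {k. k < N \<and> (\<exists>j<n. \<epsilon> \<le> g k j w)}}
             \<inter> {w\<in>space M. \<forall>k\<ge>k0. g k (I k w) w < \<epsilon>}"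
  shows "E \<in> events \<and> prob E \<le> (1 - 1 / n) ^ p"
proof -
  obtain F where F: "\<And>k. subalgebra M (F k)" "\<And>k. sets (F k) \<subseteq> sets (F (Suc k))"
    and U_F: "\<And>j k. j \<le> k \<Longrightarrow> U j \<in> borel_measurable (F k)"
    and I_F: "\<And>j k. j < k \<Longrightarrow> I j \<in> F k \<rightarrow>\<^sub>M count_space UNIV"
    and I_indep: "\<And>k C m. C \<in> sets (F k) \<Longrightarrow>
      prob (C \<inter> {w\<in>space M. I k w = m}) = prob C * prob {w\<in>space M. I k w = m}"
    using filtration_of_indep_sequences[OF indep] by blast
  have g_F: "(\<lambda>w. g k (i w) w) \<in> borel_measurable (F K)"
    if "k \<le> K" "i \<in> F K \<rightarrow>\<^sub>M count_space UNIV" for k K i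
  proof -
    have "(\<lambda>w. pgrad (Lh kp n (dsms_bw nu hmin hmax h1 U k w))
        (dsms_state kp' n nu hmin hmax h1 X0 U I k w) (i w)) \<in> borel_measurable (F K)"
      using that U_F I_F by (intro measurable_dsms_pgrad[OF prof]) auto
    then show ?thesis unfolding g_def by measurable
  qed
  have "g k j \<in> borel_measurable (F k)" for k j
    using g_F[of k k "\<lambda>_. j"] by simp
  moreover have "(\<lambda>w. g k (I k w) w) \<in> borel_measurable (F (Suc k))" for k
    using g_F I_F by simp
  moreover have "I k \<in> M \<rightarrow>\<^sub>M count_space UNIV" for k
    using F(1) I_F[of k "Suc k"] by (blast intro: measurable_from_subalg)
  moreover have "prob (C \<inter> {w\<in>space M. I k w = m}) = prob C / n"
    if "C \<in> sets (F k)" "m < n" for k C m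
    using I_indep[OF that(1)] I_unif[OF that(2)] by simp
  ultimately show ?thesis
    unfolding E_def Collect_conj_eq2[symmetric]
    by (rule prob_many_hits_uniform_index_misses_le[where F=F, OF F])
qed

theorem lemma1:
  fixes M :: "'w measure"
    and kp kp' :: "real \<Rightarrow> real"
    and n :: nat and hmin hmax h1 \<epsilon> :: real
    and nu :: "nat \<Rightarrow> real"
    and X0 :: "nat \<Rightarrow> 'a::euclidean_space"
    and U :: "nat \<Rightarrow> 'w \<Rightarrow> real"
    and I :: "nat \<Rightarrow> 'w \<Rightarrow> nat"
    and k0 p :: nat
  assumes "prob_space M"
    and "profile kp kp'"
    and "n \<ge> 1"
    and "0 < hmin" and "hmin < hmax"
    and "hmin \<le> h1" and "h1 \<le> hmax"
    and "\<forall>k. nu k \<ge> 0" and "nu \<longlonglongrightarrow> 0"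
    and "\<epsilon> > 0"
    and indep: "prob_space.indep_vars M (\<lambda>_. borel)
                  (\<lambda>x. case x of Inl k \<Rightarrow> U k | Inr k \<Rightarrow> (\<lambda>w. real (I k w))) UNIV"
    and U_unif: "\<forall>k. distr M borel (U k) = uniform_measure lborel {-1<..<1}"
    and I_range: "\<forall>k. \<forall>w\<in>space M. I k w < n"
    and I_unif: "\<forall>k j. j < n \<longrightarrow> measure M {w\<in>space M. I k w = j} = 1 / real n"
  defines "A \<equiv> {w\<in>space M. \<forall>k\<ge>k0.
               norm (pgrad (Lh kp n (dsms_bw nu hmin hmax h1 U k w)) (dsms_state kp' n nu hmin hmax h1 X0 U I k w) (I k w)) < \<epsilon>}"
    and "T \<equiv> (\<lambda>q w. hit_time (\<lambda>k. grad_max n (Lh kp n (dsms_bw nu hmin hmax h1 U k w)) (dsms_state kp' n nu hmin hmax h1 X0 U I k w) \<ge> \<epsilon>) q)"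
  shows "{w\<in>space M. T (k0 + p) w < \<infinity>} \<inter> A \<in> sets M
    \<and> measure M ({w\<in>space M. T (k0 + p) w < \<infinity>} \<inter> A) \<le> (1 - 1 / real n) ^ p"
proof -
  interpret prob_space M by fact
  show ?thesis
    unfolding T_def A_def hit_time_finite_iff grad_max_ge_iff[OF \<open>n \<ge> 1\<close>]
    by (rule prob_dsms_gradient_misses_le[OF \<open>profile kp kp'\<close> indep I_unif[rule_format]])
qed

end
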